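(* For $M,N\in\Lambda$ and $A\in\mathcal A$, if $A\sqsubseteq M$ and $M\to_{\mathsf v}N$ then $A\sqsubseteq N$.
   Context: $\lambda$-terms and values are $M,N::=V\mid MN$, $V::=x\mid\lambda x.M$, up to $\alpha$-conversion. Rules: $(\beta_v)$ $(\lambda x.M)V\to M\{x:=V\}$ if $V$ is a value; $(\sigma_1)$ $(\lambda x.M)NP\to(\lambda x.MP)N$ if $x\notin\mathrm{FV}(P)$; $(\sigma_3)$ $V((\lambda x.M)N)\to(\lambda x.VM)N$ if $V$ is a value and $x\notin\mathrm{FV}(V)$. $\to_{\mathsf v}$ is the contextual closure of their union. $\Lambda_\bot$ is the set of $\lambda$-terms possibly containing a constant $\bot$; $\sqsubseteq$ is the smallest context-closed preorder on $\Lambda_\bot$ with $\bot\sqsubseteq x$ and $\bot\sqsubseteq\lambda x.M$ for all variables $x$ and $M\in\Lambda_\bot$. Approximants $\mathcal A$ ($k\ge0$): $A::=B\mid C$; $B::=x\mid\lambda x.A\mid\bot\mid xBA_1\cdots A_k$; $C::=(\lambda x.A)(yBA_1\cdots A_k)$. *)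

theory Defs
  imports Main
begin

text \<open>Lambda terms with a constant Bot, in de Bruijn notation (terms are thus
  identified up to alpha-conversion). The set Lambda is the Bot-free terms.\<close>

datatype trm = Var nat | Lam trm | App trm trm | Bot

fun bot_free :: "trm \<Rightarrow> bool" where
  "bot_free (Var i) = True"
| "bot_free (Lam t) = bot_free t"
| "bot_free (App s t) = (bot_free s \<and> bot_free t)"
| "bot_free Bot = False"

fun is_value :: "trm \<Rightarrow> bool" where
  "is_value (Var i) = True"
| "is_value (Lam t) = True"
| "is_value (App s t) = False"
| "is_value Bot = False"

fun lift :: "trm \<Rightarrow> nat \<Rightarrow> trm" where
  "lift (Var i) k = (if i < k then Var i else Var (Suc i))"
| "lift (Lam t) k = Lam (lift t (Suc k))"
| "lift (App s t) k = App (lift s k) (lift t k)"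
| "lift Bot k = Bot"

fun subst :: "trm \<Rightarrow> trm \<Rightarrow> nat \<Rightarrow> trm" where
  "subst (Var i) s k = (if k < i then Var (i - 1) else if i = k then s else Var i)"
| "subst (Lam t) s k = Lam (subst t (lift s 0) (Suc k))"
| "subst (App t u) s k = App (subst t s k) (subst u s k)"
| "subst Bot s k = Bot"

text \<open>Call-by-value reduction with sigma-rules, contextually closed.
  sigma1: (\<lambda>x.M)NP \<rightarrow> (\<lambda>x.MP)N  (x not free in P is automatic via lifting);
  sigma3: V((\<lambda>x.M)N) \<rightarrow> (\<lambda>x.VM)N.\<close>

inductive red_v :: "trm \<Rightarrow> trm \<Rightarrow> bool" (infix "\<rightarrow>\<^sub>v" 50) where
  beta_v: "is_value V \<Longrightarrow> App (Lam M) V \<rightarrow>\<^sub>v subst M V 0"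
| sigma1: "App (App (Lam M) N) P \<rightarrow>\<^sub>v App (Lam (App M (lift P 0))) N"
| sigma3: "is_value V \<Longrightarrow> App V (App (Lam M) N) \<rightarrow>\<^sub>v App (Lam (App (lift V 0) M)) N"
| appL: "M \<rightarrow>\<^sub>v M' \<Longrightarrow> App M N \<rightarrow>\<^sub>v App M' N"
| appR: "N \<rightarrow>\<^sub>v N' \<Longrightarrow> App M N \<rightarrow>\<^sub>v App M N'"
| lam: "M \<rightarrow>\<^sub>v M' \<Longrightarrow> Lam M \<rightarrow>\<^sub>v Lam M'"

inductive approx_le :: "trm \<Rightarrow> trm \<Rightarrow> bool" (infix "\<sqsubseteq>" 50) where
  le_refl: "M \<sqsubseteq> M"
| le_trans: "M \<sqsubseteq> N \<Longrightarrow> N \<sqsubseteq> P \<Longrightarrow> M \<sqsubseteq> P"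
| bot_var: "Bot \<sqsubseteq> Var x"
| bot_lam: "Bot \<sqsubseteq> Lam M"
| le_lam: "M \<sqsubseteq> M' \<Longrightarrow> Lam M \<sqsubseteq> Lam M'"
| le_appL: "M \<sqsubseteq> M' \<Longrightarrow> App M N \<sqsubseteq> App M' N"
| le_appR: "N \<sqsubseteq> N' \<Longrightarrow> App M N \<sqsubseteq> App M N'"

text \<open>Approximants: A ::= B | C; B ::= x | \<lambda>x.A | Bot | x B A1..Ak;
  C ::= (\<lambda>x.A)(y B A1..Ak).  Iterated application x B A1 .. Ak is
  foldl App (App (Var x) B) [A1,..,Ak].\<close>

inductive is_A :: "trm \<Rightarrow> bool" and is_B :: "trm \<Rightarrow> bool" where
  A_B: "is_B t \<Longrightarrow> is_A t"
| A_C: "is_A a \<Longrightarrow> is_B b \<Longrightarrow> (\<forall>a'\<in>set as. is_A a') \<Longrightarrow>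
        is_A (App (Lam a) (foldl App (App (Var y) b) as))"
| B_var: "is_B (Var x)"
| B_lam: "is_A a \<Longrightarrow> is_B (Lam a)"
| B_bot: "is_B Bot"
| B_app: "is_B b \<Longrightarrow> (\<forall>a'\<in>set as. is_A a') \<Longrightarrow> is_B (foldl App (App (Var x) b) as)"

end

theory Submission
  imports Defs
begin

text \<open>The preorder \<open>\<sqsubseteq>\<close> is the structural order in which \<open>Bot\<close> may grow into
  a value. An approximant never lies below a redex, at any position: each of its
  applications has a variable-headed (neutral) function part, or is a \<open>\<lambda>\<close> applied
  to a neutral application, and neither shape can grow into a \<open>\<beta>\<^sub>v\<close>-, \<open>\<sigma>\<^sub>1\<close>- or
  \<open>\<sigma>\<^sub>3\<close>-redex. So a step \<open>M \<rightarrow>\<^sub>v N\<close> contracts a redex inside an abstraction that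
  the approximant covers by \<open>Bot\<close>, and the approximant stays below \<open>N\<close>.\<close>

fun struct_le :: "trm \<Rightarrow> trm \<Rightarrow> bool" where
  "struct_le Bot t = (t = Bot \<or> is_value t)"
| "struct_le (Var i) t = (t = Var i)"
| "struct_le (Lam s) t = (case t of Lam t' \<Rightarrow> struct_le s t' | _ \<Rightarrow> False)"
| "struct_le (App s1 s2) t =
     (case t of App t1 t2 \<Rightarrow> struct_le s1 t1 \<and> struct_le s2 t2 | _ \<Rightarrow> False)"

lemma struct_le_refl: "struct_le t t"
  by (induction t) auto

lemma struct_le_trans: "struct_le s t \<Longrightarrow> struct_le t u \<Longrightarrow> struct_le s u"
proof (induction s arbitrary: t u)
  case Bot
  then show ?case
    by (cases t; cases u) auto
qed (auto split: trm.splits)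

lemma approx_le_iff_struct_le: "s \<sqsubseteq> t \<longleftrightarrow> struct_le s t"
proof
  show "s \<sqsubseteq> t \<Longrightarrow> struct_le s t"
    by (induction rule: approx_le.induct) (auto simp: struct_le_refl intro: struct_le_trans)
  show "struct_le s t \<Longrightarrow> s \<sqsubseteq> t"
  proof (induction s arbitrary: t)
    case (App s1 s2)
    then obtain t1 t2 where "t = App t1 t2" "s1 \<sqsubseteq> t1" "s2 \<sqsubseteq> t2"
      by (auto split: trm.splits)
    then show ?case
      by (meson le_appL le_appR le_trans)
  next
    case Bot
    then show ?case
      by (cases t) (auto intro: approx_le.intros)
  qed (auto split: trm.splits intro: approx_le.intros)
qed

lemma approx_le_Var_iff [simp]: "Var i \<sqsubseteq> t \<longleftrightarrow> t = Var i"
  by (simp add: approx_le_iff_struct_le)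

lemma approx_le_Bot_iff [simp]: "Bot \<sqsubseteq> t \<longleftrightarrow> t = Bot \<or> is_value t"
  by (simp add: approx_le_iff_struct_le)

lemma approx_le_Lam_iff [simp]: "Lam s \<sqsubseteq> t \<longleftrightarrow> (\<exists>t'. t = Lam t' \<and> s \<sqsubseteq> t')"
  by (simp add: approx_le_iff_struct_le split: trm.split)

lemma approx_le_App_iff [simp]:
  "App s1 s2 \<sqsubseteq> t \<longleftrightarrow> (\<exists>t1 t2. t = App t1 t2 \<and> s1 \<sqsubseteq> t1 \<and> s2 \<sqsubseteq> t2)"
  by (simp add: approx_le_iff_struct_le split: trm.split)

inductive root_redex :: "trm \<Rightarrow> bool" where
  beta_v_redex: "is_value V \<Longrightarrow> root_redex (App (Lam M) V)"
| sigma1_redex: "root_redex (App (App (Lam M) N) P)"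
| sigma3_redex: "is_value V \<Longrightarrow> root_redex (App V (App (Lam M) N))"

fun approximates_no_redex :: "trm \<Rightarrow> bool" where
  "approximates_no_redex (Lam s) = approximates_no_redex s"
| "approximates_no_redex (App s t) =
     (approximates_no_redex s \<and> approximates_no_redex t \<and>
      (\<forall>R. App s t \<sqsubseteq> R \<longrightarrow> \<not> root_redex R))"
| "approximates_no_redex _ = True"

lemma approximates_no_redex_not_below_root_redex:
  assumes "approximates_no_redex A" "A \<sqsubseteq> R" "root_redex R"
  shows False
  using assms by (cases A) (auto elim: root_redex.cases)

lemma approx_le_red_v_approximates_no_redex:
  assumes "M \<rightarrow>\<^sub>v N" "approximates_no_redex A" "A \<sqsubseteq> M"
  shows "A \<sqsubseteq> N"
  using assms
proof (induction arbitrary: A)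
  case (beta_v V M)
  then show ?case
    using approximates_no_redex_not_below_root_redex root_redex.beta_v_redex by blast
next
  case (sigma1 M N P)
  then show ?case
    using approximates_no_redex_not_below_root_redex root_redex.sigma1_redex by blast
next
  case (sigma3 V M N)
  then show ?case
    using approximates_no_redex_not_below_root_redex root_redex.sigma3_redex by blast
next
  case (appL M M' N)
  then show ?case by (cases A) auto
next
  case (appR N N' M)
  then show ?case by (cases A) auto
next
  case (lam M M')
  then show ?case by (cases A) auto
qed

fun neutral :: "trm \<Rightarrow> bool" where
  "neutral (Var x) = True"
| "neutral (App s t) = neutral s"
| "neutral _ = False"

lemma neutral_approx_le: "neutral s \<Longrightarrow> s \<sqsubseteq> t \<Longrightarrow> neutral t"
  by (induction s arbitrary: t rule: neutral.induct) auto

lemma neutral_foldl_App: "neutral h \<Longrightarrow> neutral (foldl App h as)"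
  by (induction as arbitrary: h) auto

lemma foldl_App_is_App: "\<exists>s t. foldl App (App h b) as = App s t"
  by (induction as arbitrary: h b) auto

lemma is_B_not_below_App_Lam:
  assumes "is_B t"
  shows "\<not> t \<sqsubseteq> App (Lam M) N"
  using assms
proof cases
  case (B_app b as x)
  then show ?thesis
    using neutral_approx_le neutral_foldl_App[of "App (Var x) b" as] by fastforce
qed auto

lemma neutral_below_value:
  assumes "neutral s" "s \<sqsubseteq> V" "is_value V"
  shows "\<exists>x. s = Var x"
proof -
  have "neutral V"
    using assms(1,2) by (rule neutral_approx_le)
  with assms(3) obtain x where "V = Var x"
    by (cases V) auto
  with assms show ?thesis
    by (cases s) auto
qed

lemma App_neutral_below_root_redex:
  assumes "neutral s" "App s t \<sqsubseteq> R" "root_redex R"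
  shows "\<exists>x M N. s = Var x \<and> t \<sqsubseteq> App (Lam M) N"
  using assms(3,1,2)
proof cases
  case (sigma3_redex V M N)
  then show ?thesis
    using assms neutral_below_value by auto
qed (auto dest: neutral_approx_le)

lemma App_Lam_neutral_not_below_root_redex:
  assumes "neutral (App u1 u2)" "App (Lam a) (App u1 u2) \<sqsubseteq> R" "root_redex R"
  shows False
  using assms(3,1,2)
proof cases
  case (beta_v_redex V M)
  then show ?thesis
    using assms neutral_below_value by fastforce
qed (auto dest: neutral_approx_le)

lemma approximates_no_redex_foldl_App:
  assumes "approximates_no_redex b" "\<And>M N. \<not> b \<sqsubseteq> App (Lam M) N"
    and "\<forall>a\<in>set as. approximates_no_redex a"
  shows "approximates_no_redex (foldl App (App (Var x) b) as)"
  using assms(3)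
proof (induction as rule: rev_induct)
  case Nil
  have "\<not> root_redex R" if "App (Var x) b \<sqsubseteq> R" for R
    using App_neutral_below_root_redex[of "Var x" b R] that assms(2) by auto
  with assms(1) show ?case
    by simp
next
  case (snoc a as)
  let ?s = "foldl App (App (Var x) b) as"
  have "\<nexists>y. ?s = Var y"
    using foldl_App_is_App by (metis trm.distinct(3))
  then have "\<not> root_redex R" if "App ?s a \<sqsubseteq> R" for R
    using App_neutral_below_root_redex[of ?s a R] that neutral_foldl_App by auto
  with snoc show ?case
    by simp
qed

lemma approximates_no_redex_is_A: "is_A t \<Longrightarrow> approximates_no_redex t"
  and approximates_no_redex_is_B: "is_B t \<Longrightarrow> approximates_no_redex t"
proof (induction rule: is_A_is_B.inducts)
  case (A_C a b as y)
  let ?u = "foldl App (App (Var y) b) as"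
  obtain u1 u2 where u: "?u = App u1 u2"
    using foldl_App_is_App by blast
  have "neutral (App u1 u2)"
    using neutral_foldl_App[of "App (Var y) b" as] u by simp
  then have "\<not> root_redex R" if "App (Lam a) ?u \<sqsubseteq> R" for R
    using App_Lam_neutral_not_below_root_redex that u by metis
  moreover have "approximates_no_redex ?u"
    using A_C approximates_no_redex_foldl_App is_B_not_below_App_Lam by blast
  ultimately show ?case
    using A_C by simp
next
  case (B_app b as x)
  then show ?case
    by (intro approximates_no_redex_foldl_App) (auto dest: is_B_not_below_App_Lam)
qed auto

theorem lemma2p5:
  assumes "bot_free M" and "bot_free N" and "is_A A"
    and "A \<sqsubseteq> M" and "M \<rightarrow>\<^sub>v N"
  shows "A \<sqsubseteq> N"
  using approx_le_red_v_approximates_no_redex approximates_no_redex_is_A assms(3-5) by blast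

end
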